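(* Let $T$ be a complete theory with monster model $\mathcal{U}$, $A\subseteq\mathcal{U}$ small, $\mu\in\mathfrak{M}_x(\mathcal{U})$, $\nu\in\mathfrak{M}_y(\mathcal{U})$, and suppose $\lambda\in\mathfrak{M}_{xy}(A)$ witnesses $\mu\geq_{\mathbb{E},A}\nu$. Then for any $\omega\in\operatorname{E}(\lambda,\mu)$, any $\varphi(y)\in\mathcal{L}_y(\mathcal{U})$ and any $\epsilon>0$, there exist $\gamma^-(x,y),\gamma^+(x,y)\in\mathbb{B}_{xy}(A)$ such that (1) $\gamma^-(x,y)\subseteq(\varphi(y)\wedge x=x)\subseteq\gamma^+(x,y)$; (2) $\omega(\gamma^+(x,y))-\omega(\gamma^-(x,y))<\epsilon$; (3) $|\omega(\gamma^{\dagger}(x,y))-\nu(\varphi(y))|<\epsilon$ for $\dagger\in\{+,-\}$.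
   Context: For $B\subseteq\mathcal{U}$, $\mathcal{L}_x(B)$ is the Boolean algebra of formulas in $x$ with parameters from $B$ modulo $T$, identified with $B$-definable sets, and embedded in $\mathcal{L}_{xy}(B)$ via $\varphi(x)\mapsto\varphi(x)\wedge y=y$; $\mathfrak{M}_x(B)$ is the set of finitely additive probability measures on $\mathcal{L}_x(B)$. For $\omega\in\mathfrak{M}_{xy}(B)$, $\pi_x(\omega)(\varphi(x))=\omega(\varphi(x)\wedge y=y)$ (similarly $\pi_y$); $\omega|_C$ is restriction. $\operatorname{E}(\lambda,\mu)=\{\omega\in\mathfrak{M}_{xy}(\mathcal{U}):\omega|_A=\lambda,\pi_x(\omega)=\mu\}$. $\lambda$ witnesses $\mu\geq_{\mathbb{E},A}\nu$ means $\pi_x(\lambda)=\mu|_A$ and $\pi_y(\omega)=\nu$ for all $\omega\in\operatorname{E}(\lambda,\mu)$. $\mathbb{B}_{xy}(A)$ is the Boolean subalgebra of $\mathcal{L}_{xy}(\mathcal{U})$ generated by $\{\varphi(x)\wedge y=y:\varphi(x)\in\mathcal{L}_x(\mathcal{U})\}\cup\mathcal{L}_{xy}(A)$. *)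

theory Defs
  imports Complex_Main
begin

datatype ('f,'u) trm = Var nat | Par 'u | App 'f "('f,'u) trm list"

datatype ('f,'r,'u) fm =
    FBot
  | FEq "('f,'u) trm" "('f,'u) trm"
  | FRel 'r "('f,'u) trm list"
  | FNeg "('f,'r,'u) fm"
  | FConj "('f,'r,'u) fm" "('f,'r,'u) fm"
  | FEx nat "('f,'r,'u) fm"

text \<open>A structure (the monster model) whose universe is the whole type 'u.\<close>
record ('f,'r,'u) struc =
  fun_ar  :: "'f \<Rightarrow> nat"
  rel_ar  :: "'r \<Rightarrow> nat"
  fun_int :: "'f \<Rightarrow> 'u list \<Rightarrow> 'u"
  rel_int :: "'r \<Rightarrow> 'u list \<Rightarrow> bool"

fun wf_trm :: "('f \<Rightarrow> nat) \<Rightarrow> ('f,'u) trm \<Rightarrow> bool" where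
  "wf_trm ar (Var i) = True"
| "wf_trm ar (Par a) = True"
| "wf_trm ar (App f ts) = (length ts = ar f \<and> list_all (wf_trm ar) ts)"

fun fv_trm :: "('f,'u) trm \<Rightarrow> nat set" where
  "fv_trm (Var i) = {i}"
| "fv_trm (Par a) = {}"
| "fv_trm (App f ts) = (\<Union>t\<in>set ts. fv_trm t)"

fun par_trm :: "('f,'u) trm \<Rightarrow> 'u set" where
  "par_trm (Var i) = {}"
| "par_trm (Par a) = {a}"
| "par_trm (App f ts) = (\<Union>t\<in>set ts. par_trm t)"

fun eval_trm :: "('f,'r,'u) struc \<Rightarrow> (nat \<Rightarrow> 'u) \<Rightarrow> ('f,'u) trm \<Rightarrow> 'u" where
  "eval_trm M e (Var i) = e i"
| "eval_trm M e (Par a) = a"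
| "eval_trm M e (App f ts) = fun_int M f (map (eval_trm M e) ts)"

fun wf_fm :: "('f,'r,'u) struc \<Rightarrow> ('f,'r,'u) fm \<Rightarrow> bool" where
  "wf_fm M FBot = True"
| "wf_fm M (FEq s t) = (wf_trm (fun_ar M) s \<and> wf_trm (fun_ar M) t)"
| "wf_fm M (FRel r ts) = (length ts = rel_ar M r \<and> list_all (wf_trm (fun_ar M)) ts)"
| "wf_fm M (FNeg \<phi>) = wf_fm M \<phi>"
| "wf_fm M (FConj \<phi> \<psi>) = (wf_fm M \<phi> \<and> wf_fm M \<psi>)"
| "wf_fm M (FEx i \<phi>) = wf_fm M \<phi>"

fun fv_fm :: "('f,'r,'u) fm \<Rightarrow> nat set" where
  "fv_fm FBot = {}"
| "fv_fm (FEq s t) = fv_trm s \<union> fv_trm t"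
| "fv_fm (FRel r ts) = (\<Union>t\<in>set ts. fv_trm t)"
| "fv_fm (FNeg \<phi>) = fv_fm \<phi>"
| "fv_fm (FConj \<phi> \<psi>) = fv_fm \<phi> \<union> fv_fm \<psi>"
| "fv_fm (FEx i \<phi>) = fv_fm \<phi> - {i}"

fun par_fm :: "('f,'r,'u) fm \<Rightarrow> 'u set" where
  "par_fm FBot = {}"
| "par_fm (FEq s t) = par_trm s \<union> par_trm t"
| "par_fm (FRel r ts) = (\<Union>t\<in>set ts. par_trm t)"
| "par_fm (FNeg \<phi>) = par_fm \<phi>"
| "par_fm (FConj \<phi> \<psi>) = par_fm \<phi> \<union> par_fm \<psi>"
| "par_fm (FEx i \<phi>) = par_fm \<phi>"

fun sat :: "('f,'r,'u) struc \<Rightarrow> (nat \<Rightarrow> 'u) \<Rightarrow> ('f,'r,'u) fm \<Rightarrow> bool" where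
  "sat M e FBot = False"
| "sat M e (FEq s t) = (eval_trm M e s = eval_trm M e t)"
| "sat M e (FRel r ts) = rel_int M r (map (eval_trm M e) ts)"
| "sat M e (FNeg \<phi>) = (\<not> sat M e \<phi>)"
| "sat M e (FConj \<phi> \<psi>) = (sat M e \<phi> \<and> sat M e \<psi>)"
| "sat M e (FEx i \<phi>) = (\<exists>a. sat M (e(i := a)) \<phi>)"

definition formula_in :: "('f,'r,'u) struc \<Rightarrow> nat \<Rightarrow> 'u set \<Rightarrow> ('f,'r,'u) fm \<Rightarrow> bool" where
  "formula_in M m B \<phi> \<longleftrightarrow> wf_fm M \<phi> \<and> fv_fm \<phi> \<subseteq> {..<m} \<and> par_fm \<phi> \<subseteq> B"

section \<open>Definable sets (formulas modulo T identified with definable sets)\<close>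

text \<open>L_x(B) for an m-tuple of variables x (variables 0..m-1): subsets of U^m.\<close>
definition Ldef :: "('f,'r,'u) struc \<Rightarrow> nat \<Rightarrow> 'u set \<Rightarrow> 'u list set set" where
  "Ldef M m B = (\<lambda>\<phi>. {a. length a = m \<and> sat M (\<lambda>i. a ! i) \<phi>}) ` {\<phi>. formula_in M m B \<phi>}"

text \<open>L_xy(B), x an n-tuple (variables 0..n-1), y a k-tuple (variables n..n+k-1).\<close>
definition Ldef2 :: "('f,'r,'u) struc \<Rightarrow> nat \<Rightarrow> nat \<Rightarrow> 'u set \<Rightarrow> ('u list \<times> 'u list) set set" where
  "Ldef2 M n k B = (\<lambda>\<phi>. {(a, b). length a = n \<and> length b = k \<and> sat M (\<lambda>i. (a @ b) ! i) \<phi>})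
      ` {\<phi>. formula_in M (n + k) B \<phi>}"

definition top2 :: "nat \<Rightarrow> nat \<Rightarrow> ('u list \<times> 'u list) set" where
  "top2 n k = {(a, b). length a = n \<and> length b = k}"

text \<open>Embedding phi(x) |-> phi(x) /\ y=y, and psi(y) |-> psi(y) /\ x=x.\<close>
definition cyl_x :: "nat \<Rightarrow> 'u list set \<Rightarrow> ('u list \<times> 'u list) set" where
  "cyl_x k S = {(a, b). a \<in> S \<and> length b = k}"

definition cyl_y :: "nat \<Rightarrow> 'u list set \<Rightarrow> ('u list \<times> 'u list) set" where
  "cyl_y n S = {(a, b). length a = n \<and> b \<in> S}"

definition fa_prob :: "'a set set \<Rightarrow> 'a set \<Rightarrow> ('a set \<Rightarrow> real) \<Rightarrow> bool" where
  "fa_prob L tp m \<longleftrightarrow> tp \<in> L \<and> m tp = 1 \<and> (\<forall>S\<in>L. 0 \<le> m S) \<and>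
     (\<forall>S\<in>L. \<forall>T\<in>L. S \<inter> T = {} \<longrightarrow> m (S \<union> T) = m S + m T)"

text \<open>M_x(B): finitely additive probability measures on L_x(B) (values outside L_x(B) irrelevant).\<close>
definition Meas :: "('f,'r,'u) struc \<Rightarrow> nat \<Rightarrow> 'u set \<Rightarrow> ('u list set \<Rightarrow> real) \<Rightarrow> bool" where
  "Meas M m B \<mu> \<longleftrightarrow> fa_prob (Ldef M m B) {a. length a = m} \<mu>"

definition Meas2 :: "('f,'r,'u) struc \<Rightarrow> nat \<Rightarrow> nat \<Rightarrow> 'u set \<Rightarrow> (('u list \<times> 'u list) set \<Rightarrow> real) \<Rightarrow> bool" where
  "Meas2 M n k B \<omega> \<longleftrightarrow> fa_prob (Ldef2 M n k B) (top2 n k) \<omega>"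

definition E_set :: "('f,'r,'u) struc \<Rightarrow> nat \<Rightarrow> nat \<Rightarrow> 'u set
    \<Rightarrow> (('u list \<times> 'u list) set \<Rightarrow> real) \<Rightarrow> ('u list set \<Rightarrow> real)
    \<Rightarrow> (('u list \<times> 'u list) set \<Rightarrow> real) set" where
  "E_set M n k A lam \<mu> = {\<omega>. Meas2 M n k UNIV \<omega>
      \<and> (\<forall>S\<in>Ldef2 M n k A. \<omega> S = lam S)
      \<and> (\<forall>S\<in>Ldef M n UNIV. \<omega> (cyl_x k S) = \<mu> S)}"

definition witnesses :: "('f,'r,'u) struc \<Rightarrow> nat \<Rightarrow> nat \<Rightarrow> 'u set
    \<Rightarrow> (('u list \<times> 'u list) set \<Rightarrow> real) \<Rightarrow> ('u list set \<Rightarrow> real) \<Rightarrow> ('u list set \<Rightarrow> real) \<Rightarrow> bool" where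
  "witnesses M n k A lam \<mu> \<nu> \<longleftrightarrow>
     (\<forall>S\<in>Ldef M n A. lam (cyl_x k S) = \<mu> S) \<and>
     (\<forall>\<omega>\<in>E_set M n k A lam \<mu>. \<forall>S\<in>Ldef M k UNIV. \<omega> (cyl_y n S) = \<nu> S)"

inductive_set Bxy :: "('f,'r,'u) struc \<Rightarrow> nat \<Rightarrow> nat \<Rightarrow> 'u set \<Rightarrow> ('u list \<times> 'u list) set set"
  for M n k A where
  cyl: "S \<in> Ldef M n UNIV \<Longrightarrow> cyl_x k S \<in> Bxy M n k A"
| par: "S \<in> Ldef2 M n k A \<Longrightarrow> S \<in> Bxy M n k A"
| top: "top2 n k \<in> Bxy M n k A"
| compl: "S \<in> Bxy M n k A \<Longrightarrow> top2 n k - S \<in> Bxy M n k A"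
| inter: "S \<in> Bxy M n k A \<Longrightarrow> T \<in> Bxy M n k A \<Longrightarrow> S \<inter> T \<in> Bxy M n k A"

end

theory Submission
  imports Defs "HOL-Analysis.Analysis"
begin

(* If every element of B_xy(A) inside the cylinder S = (phi(y) /\ x=x) had omega-measure at most
   nu(phi) - d with d > 0, the restriction of omega to the Boolean algebra B_xy(A) would extend to
   a finitely additive measure Q on all sets with Q(S) <= nu(phi) - d: for finitely many
   constraints an explicit atomic measure does this, and compactness of a product of intervals
   handles all constraints at once. As B_xy(A) contains L_xy(A) and the x-cylinders, Q lies in
   E(lambda, mu), so Q(S) = nu(phi) because lambda witnesses mu >=_{E,A} nu. Dually for outer
   approximations; gamma^- and gamma^+ are inner and outer approximations of S within epsilon/2
   of nu(phi). *)

section \<open>Finitely additive extensions of set functions\<close>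

lemma (in ring_of_sets) additive_empty:
  fixes f :: "'a set \<Rightarrow> 'b::cancel_comm_monoid_add"
  assumes "additive M f"
  shows "f {} = 0"
  using additiveD[OF assms, of "{}" "{}"] by simp

lemma (in ring_of_sets) additive_Union_disjoint:
  fixes f :: "'a set \<Rightarrow> 'b::cancel_comm_monoid_add"
  assumes f: "additive M f" and "finite D" "D \<subseteq> M" "disjoint D"
  shows "f (\<Union>D) = (\<Sum>C\<in>D. f C)"
  using assms(2-4)
proof (induction D rule: finite_induct)
  case empty
  then show ?case using additive_empty[OF f] by simp
next
  case (insert C D)
  have "C \<inter> \<Union>D = {}"
    using insert.hyps(2) insert.prems(2) by (auto simp: disjoint_def)
  then have "f (C \<union> \<Union>D) = f C + f (\<Union>D)"
    using insert by (intro additiveD[OF f]) auto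
  moreover have "f (\<Union>D) = (\<Sum>C\<in>D. f C)"
    using insert by (auto intro: pairwise_subset)
  ultimately show ?case using insert.hyps by simp
qed

lemma (in ring_of_sets) nonneg_additive_increasing:
  fixes f :: "'a set \<Rightarrow> 'b::ordered_comm_monoid_add"
  assumes f: "additive M f" and nonneg: "\<And>X. X \<in> M \<Longrightarrow> 0 \<le> f X"
  shows "increasing M f"
  unfolding increasing_def
proof (intro ballI impI)
  fix X Y assume XY: "X \<in> M" "Y \<in> M" "X \<subseteq> Y"
  have "f X = f X + 0" by simp
  also have "\<dots> \<le> f X + f (Y - X)" using XY by (intro add_left_mono nonneg) auto
  also have "\<dots> = f (X \<union> (Y - X))" using XY by (intro additiveD[OF f, symmetric]) auto
  also have "\<dots> = f Y" using XY(3) by (metis Diff_partition)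
  finally show "f X \<le> f Y" .
qed

lemma (in algebra) finite_partition_refining:
  assumes "finite F" "F \<subseteq> M"
  obtains Cs where "finite Cs" "Cs \<subseteq> M" "disjoint Cs" "{} \<notin> Cs" "\<Union>Cs = \<Omega>"
    "\<And>X C. X \<in> F \<Longrightarrow> C \<in> Cs \<Longrightarrow> C \<subseteq> X \<or> C \<inter> X = {}"
proof
  define sig where "sig y = {G\<in>F. y \<in> G}" for y
  define cell where "cell T = {y\<in>\<Omega>. sig y = T}" for T
  define Cs where "Cs = cell ` sig ` \<Omega>"
  have sig_range: "sig ` \<Omega> \<subseteq> Pow F" unfolding sig_def by auto
  then have "finite (sig ` \<Omega>)" using assms(1) by (simp add: finite_subset)
  then show "finite Cs" unfolding Cs_def by simp
  have sig_eq: "sig y = T \<longleftrightarrow> (\<forall>G\<in>F. y \<in> G \<longleftrightarrow> G \<in> T)" if "T \<subseteq> F" for y T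
    using that unfolding sig_def by blast
  have "{y\<in>\<Omega>. y \<in> G \<longleftrightarrow> G \<in> T} \<in> M" if "G \<in> F" for G T
  proof (cases "G \<in> T")
    case True
    then have "{y\<in>\<Omega>. y \<in> G \<longleftrightarrow> G \<in> T} = \<Omega> \<inter> G" by blast
    then show ?thesis using that assms(2) by (metis Int subsetD top)
  next
    case False
    then have "{y\<in>\<Omega>. y \<in> G \<longleftrightarrow> G \<in> T} = \<Omega> - G" by blast
    then show ?thesis using that assms(2) by (metis compl_sets subsetD)
  qed
  then have "cell T \<in> M" if "T \<subseteq> F" for T
    unfolding cell_def sig_eq[OF that] using assms(1) by (intro sets_Collect_finite_All)
  then show "Cs \<subseteq> M" unfolding Cs_def using sig_range by blast
  show "disjoint Cs" "{} \<notin> Cs" "\<Union>Cs = \<Omega>"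
    unfolding Cs_def cell_def disjoint_def by blast+
  have sig_mem: "X \<in> sig y \<longleftrightarrow> y \<in> X" if "X \<in> F" for X y
    using that unfolding sig_def by blast
  show "C \<subseteq> X \<or> C \<inter> X = {}" if "X \<in> F" "C \<in> Cs" for X C
    using that(2) sig_mem[OF that(1)] unfolding Cs_def cell_def by blast
qed

lemma (in algebra) finite_additive_extension_le:
  fixes P :: "'a set \<Rightarrow> real"
  assumes P: "additive M P" "\<And>X. X \<in> M \<Longrightarrow> 0 \<le> P X"
    and F: "finite F" "F \<subseteq> M"
    and inner: "\<And>G. G \<in> M \<Longrightarrow> G \<subseteq> S \<Longrightarrow> P G \<le> d"
  obtains Q where "additive UNIV Q" "\<And>X. 0 \<le> Q X" "\<And>X. Q X \<le> P \<Omega>"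
    "\<And>X. X \<in> F \<Longrightarrow> Q X = P X" "Q S \<le> d"
proof -
  obtain Cs where Cs: "finite Cs" "Cs \<subseteq> M" "disjoint Cs" "{} \<notin> Cs" "\<Union>Cs = \<Omega>"
    and refines: "\<And>X C. X \<in> F \<Longrightarrow> C \<in> Cs \<Longrightarrow> C \<subseteq> X \<or> C \<inter> X = {}"
    using finite_partition_refining[OF F] by blast
  have "\<forall>C\<in>Cs. \<exists>y\<in>C. y \<in> S \<longleftrightarrow> C \<subseteq> S"
    using Cs(4) by (metis all_not_in_conv subsetD subsetI)
  then obtain r where r: "\<And>C. C \<in> Cs \<Longrightarrow> r C \<in> C" "\<And>C. C \<in> Cs \<Longrightarrow> r C \<in> S \<longleftrightarrow> C \<subseteq> S"
    by metis
  \<comment> \<open>Q puts the mass of each cell at one point of it, chosen outside S unless the cell lies in S.\<close>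
  define Q where "Q X = (\<Sum>C\<in>{C\<in>Cs. r C \<in> X}. P C)" for X
  have P_Union: "P (\<Union>D) = (\<Sum>C\<in>D. P C)" if "D \<subseteq> Cs" for D
    using that Cs(1-3) by (auto intro: additive_Union_disjoint[OF P(1)] finite_subset pairwise_subset)
  show ?thesis
  proof
    show "additive UNIV Q"
      unfolding additive_def
    proof (intro ballI impI)
      fix X Y :: "'a set" assume "X \<inter> Y = {}"
      then have "{C\<in>Cs. r C \<in> X \<union> Y} = {C\<in>Cs. r C \<in> X} \<union> {C\<in>Cs. r C \<in> Y}"
        "{C\<in>Cs. r C \<in> X} \<inter> {C\<in>Cs. r C \<in> Y} = {}" by auto
      then show "Q (X \<union> Y) = Q X + Q Y" unfolding Q_def using Cs(1) by (simp add: sum.union_disjoint)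
    qed
    show "0 \<le> Q X" for X
      unfolding Q_def using Cs(2) P(2) by (auto intro: sum_nonneg)
    show "Q X \<le> P \<Omega>" for X
    proof -
      have "Q X \<le> (\<Sum>C\<in>Cs. P C)"
        unfolding Q_def using Cs(1,2) P(2) by (intro sum_mono2) auto
      then show ?thesis using P_Union[of Cs] Cs(5) by simp
    qed
    show "Q X = P X" if "X \<in> F" for X
    proof -
      have "X \<subseteq> \<Omega>" using that F(2) sets_into_space by blast
      then have "X = \<Union>{C\<in>Cs. C \<subseteq> X}" using Cs(5) refines[OF that] by blast
      moreover have "{C\<in>Cs. r C \<in> X} = {C\<in>Cs. C \<subseteq> X}" using refines[OF that] r(1) by blast
      ultimately show ?thesis unfolding Q_def using P_Union[of "{C\<in>Cs. C \<subseteq> X}"] by auto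
    qed
    have "Q S = P (\<Union>{C\<in>Cs. C \<subseteq> S})"
      unfolding Q_def using r P_Union[of "{C\<in>Cs. C \<subseteq> S}"] by (auto intro: sum.cong)
    also have "\<dots> \<le> d"
      using Cs(1,2) by (intro inner finite_Union) auto
    finally show "Q S \<le> d" .
  qed
qed

definition bounded_set_functions :: "real \<Rightarrow> ('a set \<Rightarrow> real) topology" where
  "bounded_set_functions c = product_topology (\<lambda>_. top_of_set {0..c}) UNIV"

lemma compact_space_bounded_set_functions: "compact_space (bounded_set_functions c)"
  unfolding bounded_set_functions_def
  by (simp add: compact_space_product_topology compact_space_subtopology)

lemma topspace_bounded_set_functions:
  "topspace (bounded_set_functions c) = {Q. \<forall>X. Q X \<in> {0..c}}"
  unfolding bounded_set_functions_def by (auto simp: PiE_def Pi_def)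

lemma continuous_map_bounded_set_functions_eval:
  "continuous_map (bounded_set_functions c) euclideanreal (\<lambda>Q. Q X)"
proof -
  have "continuous_map (bounded_set_functions c) (top_of_set {0..c}) (\<lambda>Q. Q X)"
    unfolding bounded_set_functions_def by (rule continuous_map_product_projection) simp
  then show ?thesis by (simp add: continuous_map_in_subtopology)
qed

lemma closedin_bounded_set_functions_preimage:
  assumes "continuous_map (bounded_set_functions c) euclideanreal g" "closed C"
  shows "closedin (bounded_set_functions c) {Q \<in> topspace (bounded_set_functions c). g Q \<in> C}"
  using assms by (intro closedin_continuous_map_preimage) auto

lemma closedin_additive_bounded_set_functions:
  "closedin (bounded_set_functions c)
    {Q \<in> topspace (bounded_set_functions c). additive UNIV (Q :: 'a set \<Rightarrow> real)}"
proof -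
  let ?T = "bounded_set_functions c :: ('a set \<Rightarrow> real) topology"
  define D where "D = {XY :: 'a set \<times> 'a set. fst XY \<inter> snd XY = {}}"
  define add where
    "add XY = {Q \<in> topspace ?T. Q (fst XY \<union> snd XY) - (Q (fst XY) + Q (snd XY)) \<in> {0}}" for XY
  have "({}, {}) \<in> D" unfolding D_def by simp
  have "{Q \<in> topspace ?T. additive UNIV Q} = \<Inter>(add ` D)"
  proof (intro equalityI subsetI)
    fix Q assume "Q \<in> {Q \<in> topspace ?T. additive UNIV Q}"
    then show "Q \<in> \<Inter>(add ` D)" unfolding add_def additive_def D_def by auto
  next
    fix Q assume Q: "Q \<in> \<Inter>(add ` D)"
    then have "Q \<in> add ({}, {})" using \<open>({}, {}) \<in> D\<close> by (rule InterD[OF _ imageI])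
    moreover have "Q (X \<union> Y) = Q X + Q Y" if "X \<inter> Y = {}" for X Y
    proof -
      have "(X, Y) \<in> D" unfolding D_def using that by simp
      with Q have "Q \<in> add (X, Y)" by (rule InterD[OF _ imageI])
      then show ?thesis unfolding add_def by simp
    qed
    ultimately show "Q \<in> {Q \<in> topspace ?T. additive UNIV Q}"
      unfolding add_def additive_def by simp
  qed
  moreover have "closedin ?T (add XY)" for XY
    unfolding add_def
    by (intro closedin_bounded_set_functions_preimage continuous_map_diff continuous_map_add
        continuous_map_bounded_set_functions_eval closed_singleton)
  ultimately show ?thesis using \<open>({}, {}) \<in> D\<close> by (auto intro!: closedin_Inter)
qed

lemma additive_extension_compactness:
  fixes P :: "'a set \<Rightarrow> real"
  assumes finite_ext: "\<And>F. finite F \<Longrightarrow> F \<subseteq> M \<Longrightarrow>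
      \<exists>Q. additive UNIV Q \<and> (\<forall>X. Q X \<in> {0..c}) \<and> (\<forall>X\<in>F. Q X = P X) \<and> Q S \<le> d"
  shows "\<exists>Q. additive UNIV Q \<and> (\<forall>X. Q X \<in> {0..c}) \<and> (\<forall>X\<in>M. Q X = P X) \<and> Q S \<le> d"
proof -
  let ?T = "bounded_set_functions c"
  define good where "good = {Q \<in> topspace ?T. additive UNIV Q} \<inter> {Q \<in> topspace ?T. Q S \<in> {..d}}"
  define agree where "agree X = {Q \<in> topspace ?T. Q X \<in> {P X}}" for X
  have "closedin ?T good"
    unfolding good_def
    by (intro closedin_Int closedin_additive_bounded_set_functions closedin_bounded_set_functions_preimage
        continuous_map_bounded_set_functions_eval closed_atMost)
  moreover have "closedin ?T (agree X)" for X
    unfolding agree_def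
    by (intro closedin_bounded_set_functions_preimage continuous_map_bounded_set_functions_eval
        closed_singleton)
  ultimately have "\<forall>K\<in>insert good (agree ` M). closedin ?T K" by blast
  moreover have "\<Inter>\<F> \<noteq> {}" if "finite \<F>" "\<F> \<subseteq> insert good (agree ` M)" for \<F>
  proof -
    have "finite (\<F> - {good})" using that(1) by simp
    moreover have "\<F> - {good} \<subseteq> agree ` M" using that(2) by blast
    ultimately obtain F where F: "F \<subseteq> M" "finite F" "\<F> - {good} = agree ` F"
      using finite_subset_image by metis
    obtain Q where Q: "additive UNIV Q" "\<forall>X. Q X \<in> {0..c}" "\<forall>X\<in>F. Q X = P X" "Q S \<le> d"
      using finite_ext[OF F(2,1)] by blast
    then have "Q \<in> good" "\<And>X. X \<in> F \<Longrightarrow> Q \<in> agree X"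
      unfolding good_def agree_def topspace_bounded_set_functions by auto
    then have "Q \<in> \<Inter>\<F>" using F(3) by blast
    then show ?thesis by blast
  qed
  ultimately have "\<Inter>(insert good (agree ` M)) \<noteq> {}"
    using compact_space_bounded_set_functions compact_space_fip by metis
  then obtain Q where "Q \<in> good" "\<And>X. X \<in> M \<Longrightarrow> Q \<in> agree X" by blast
  then show ?thesis
    unfolding good_def agree_def topspace_bounded_set_functions by blast
qed

lemma (in algebra) additive_extension_le:
  fixes P :: "'a set \<Rightarrow> real"
  assumes P: "additive M P" "\<And>X. X \<in> M \<Longrightarrow> 0 \<le> P X"
    and inner: "\<And>G. G \<in> M \<Longrightarrow> G \<subseteq> S \<Longrightarrow> P G \<le> d"
  obtains Q where "additive UNIV Q" "\<And>X. 0 \<le> Q X" "\<And>X. X \<in> M \<Longrightarrow> Q X = P X" "Q S \<le> d"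
proof -
  have "\<exists>Q. additive UNIV Q \<and> (\<forall>X. Q X \<in> {0..P \<Omega>}) \<and> (\<forall>X\<in>F. Q X = P X) \<and> Q S \<le> d"
    if F: "finite F" "F \<subseteq> M" for F
  proof -
    obtain Q where "additive UNIV Q" "\<And>X. 0 \<le> Q X" "\<And>X. Q X \<le> P \<Omega>"
      "\<And>X. X \<in> F \<Longrightarrow> Q X = P X" "Q S \<le> d"
      using finite_additive_extension_le[OF P F inner] by blast
    then show ?thesis by auto
  qed
  then have "\<exists>Q. additive UNIV Q \<and> (\<forall>X. Q X \<in> {0..P \<Omega>}) \<and> (\<forall>X\<in>M. Q X = P X) \<and> Q S \<le> d"
    by (rule additive_extension_compactness)
  then show thesis using that by auto
qed

lemma (in algebra) additive_extension_ge:
  fixes P :: "'a set \<Rightarrow> real"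
  assumes P: "additive M P" "\<And>X. X \<in> M \<Longrightarrow> 0 \<le> P X"
    and "S \<subseteq> \<Omega>" and outer: "\<And>H. H \<in> M \<Longrightarrow> S \<subseteq> H \<Longrightarrow> d \<le> P H"
  obtains Q where "additive UNIV Q" "\<And>X. 0 \<le> Q X" "\<And>X. X \<in> M \<Longrightarrow> Q X = P X" "d \<le> Q S"
proof -
  have "P G \<le> P \<Omega> - d" if "G \<in> M" "G \<subseteq> \<Omega> - S" for G
  proof -
    have "P \<Omega> = P (G \<union> (\<Omega> - G))" using that(1) sets_into_space by (metis Diff_partition)
    also have "\<dots> = P G + P (\<Omega> - G)" using that(1) by (intro additiveD[OF P(1)]) auto
    finally have "P \<Omega> = P G + P (\<Omega> - G)" .
    moreover have "d \<le> P (\<Omega> - G)" using that \<open>S \<subseteq> \<Omega>\<close> by (intro outer) auto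
    ultimately show ?thesis by linarith
  qed
  then obtain Q where Q: "additive UNIV Q" "\<And>X. 0 \<le> Q X" "\<And>X. X \<in> M \<Longrightarrow> Q X = P X"
    and Q_compl: "Q (\<Omega> - S) \<le> P \<Omega> - d"
    using additive_extension_le[OF P, of "\<Omega> - S" "P \<Omega> - d"] by blast
  have "Q \<Omega> = Q (S \<union> (\<Omega> - S))" using \<open>S \<subseteq> \<Omega>\<close> by (metis Diff_partition)
  also have "\<dots> = Q S + Q (\<Omega> - S)" by (intro additiveD[OF Q(1)]) auto
  finally have "d \<le> Q S" using Q(3)[OF top] Q_compl by linarith
  with Q show thesis by (rule that)
qed

section \<open>Definable sets and the algebra B_xy(A)\<close>

lemma eval_trm_cong: "(\<forall>i\<in>fv_trm t. e i = e' i) \<Longrightarrow> eval_trm M e t = eval_trm M e' t"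
proof (induction t)
  case (App f ts)
  then have "map (eval_trm M e) ts = map (eval_trm M e') ts" by (auto simp: map_eq_conv)
  then show ?case by (simp only: eval_trm.simps)
qed auto

lemma sat_cong: "(\<forall>i\<in>fv_fm \<phi>. e i = e' i) \<Longrightarrow> sat M e \<phi> = sat M e' \<phi>"
proof (induction \<phi> arbitrary: e e')
  case (FEq s t)
  then show ?case using eval_trm_cong[of s e e' M] eval_trm_cong[of t e e' M] by simp
next
  case (FRel r ts)
  then have "map (eval_trm M e) ts = map (eval_trm M e') ts"
    by (auto intro!: map_cong eval_trm_cong)
  then show ?case by (simp only: sat.simps)
next
  case (FConj \<phi>1 \<phi>2)
  then show ?case by (metis UnCI fv_fm.simps(5) sat.simps(5))
next
  case (FEx i \<phi>)
  then have "sat M (e(i := a)) \<phi> = sat M (e'(i := a)) \<phi>" for a by (intro FEx.IH) auto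
  then show ?case by simp
qed auto

lemma Ldef2_formulaI:
  "formula_in M (n + k) C \<psi> \<Longrightarrow>
    {(a, b). length a = n \<and> length b = k \<and> sat M (\<lambda>i. (a @ b) ! i) \<psi>} \<in> Ldef2 M n k C"
  unfolding Ldef2_def by blast

lemma algebra_Ldef2: "algebra (top2 n k) (Ldef2 M n k C)"
  unfolding algebra_iff_Int
proof (intro conjI ballI)
  show "Ldef2 M n k C \<subseteq> Pow (top2 n k)" unfolding Ldef2_def top2_def by auto
  have "formula_in M (n + k) C FBot" unfolding formula_in_def by simp
  from Ldef2_formulaI[OF this] show "{} \<in> Ldef2 M n k C" by simp
next
  fix S assume "S \<in> Ldef2 M n k C"
  then obtain \<psi> where \<psi>: "formula_in M (n + k) C \<psi>"
    "S = {(a, b). length a = n \<and> length b = k \<and> sat M (\<lambda>i. (a @ b) ! i) \<psi>}"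
    unfolding Ldef2_def by blast
  have "formula_in M (n + k) C (FNeg \<psi>)" using \<psi>(1) unfolding formula_in_def by simp
  moreover have "top2 n k - S = {(a, b). length a = n \<and> length b = k \<and> sat M (\<lambda>i. (a @ b) ! i) (FNeg \<psi>)}"
    unfolding \<psi>(2) top2_def by auto
  ultimately show "top2 n k - S \<in> Ldef2 M n k C" by (simp only: Ldef2_formulaI)
next
  fix S T assume "S \<in> Ldef2 M n k C" "T \<in> Ldef2 M n k C"
  then obtain \<psi> \<theta> where \<psi>: "formula_in M (n + k) C \<psi>"
    "S = {(a, b). length a = n \<and> length b = k \<and> sat M (\<lambda>i. (a @ b) ! i) \<psi>}"
    and \<theta>: "formula_in M (n + k) C \<theta>"
    "T = {(a, b). length a = n \<and> length b = k \<and> sat M (\<lambda>i. (a @ b) ! i) \<theta>}"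
    unfolding Ldef2_def by blast
  have "formula_in M (n + k) C (FConj \<psi> \<theta>)" using \<psi>(1) \<theta>(1) unfolding formula_in_def by simp
  moreover have "S \<inter> T = {(a, b). length a = n \<and> length b = k \<and> sat M (\<lambda>i. (a @ b) ! i) (FConj \<psi> \<theta>)}"
    unfolding \<psi>(2) \<theta>(2) by auto
  ultimately show "S \<inter> T \<in> Ldef2 M n k C" by (simp only: Ldef2_formulaI)
qed

lemma Ldef2_mono: "C \<subseteq> D \<Longrightarrow> Ldef2 M n k C \<subseteq> Ldef2 M n k D"
  unfolding Ldef2_def formula_in_def by blast

lemma cyl_x_in_Ldef2:
  assumes "S \<in> Ldef M n C"
  shows "cyl_x k S \<in> Ldef2 M n k C"
proof -
  obtain \<psi> where \<psi>: "formula_in M n C \<psi>" "S = {a. length a = n \<and> sat M (\<lambda>i. a ! i) \<psi>}"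
    using assms unfolding Ldef_def by blast
  have "formula_in M (n + k) C \<psi>" using \<psi>(1) unfolding formula_in_def by auto
  moreover have "sat M (\<lambda>i. (a @ b) ! i) \<psi> = sat M (\<lambda>i. a ! i) \<psi>" if "length a = n" for a b
    using \<psi>(1) that unfolding formula_in_def by (intro sat_cong) (auto simp: nth_append)
  then have "cyl_x k S = {(a, b). length a = n \<and> length b = k \<and> sat M (\<lambda>i. (a @ b) ! i) \<psi>}"
    unfolding \<psi>(2) cyl_x_def by auto
  ultimately show ?thesis by (simp only: Ldef2_formulaI)
qed

lemma Bxy_subset_Ldef2: "Bxy M n k A \<subseteq> Ldef2 M n k UNIV"
proof
  interpret L: algebra "top2 n k" "Ldef2 M n k UNIV" by (rule algebra_Ldef2)
  show "S \<in> Ldef2 M n k UNIV" if "S \<in> Bxy M n k A" for S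
    using that
  proof (induction rule: Bxy.induct)
    case (cyl S)
    then show ?case by (rule cyl_x_in_Ldef2)
  next
    case (par S)
    then show ?case using Ldef2_mono[OF subset_UNIV] by blast
  qed (auto intro: L.compl_sets L.Int)
qed

lemma algebra_Bxy: "algebra (top2 n k) (Bxy M n k A)"
proof -
  interpret L: algebra "top2 n k" "Ldef2 M n k UNIV" by (rule algebra_Ldef2)
  have "{} \<in> Bxy M n k A" using Bxy.compl[OF Bxy.top] by simp
  then show ?thesis
    unfolding algebra_iff_Int using Bxy_subset_Ldef2 L.space_closed
    by (blast intro: Bxy.compl Bxy.inter)
qed

lemma cyl_y_subset_top2: "\<phi> \<in> Ldef M k C \<Longrightarrow> cyl_y n \<phi> \<subseteq> top2 n k"
  unfolding Ldef_def cyl_y_def top2_def by auto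

lemma E_set_nonneg_additive_Bxy:
  assumes "\<omega> \<in> E_set M n k A lam \<mu>"
  shows "additive (Bxy M n k A) \<omega>" "\<And>X. X \<in> Bxy M n k A \<Longrightarrow> 0 \<le> \<omega> X"
proof -
  have "fa_prob (Ldef2 M n k UNIV) (top2 n k) \<omega>"
    using assms unfolding E_set_def Meas2_def by blast
  then show "additive (Bxy M n k A) \<omega>" "\<And>X. X \<in> Bxy M n k A \<Longrightarrow> 0 \<le> \<omega> X"
    using Bxy_subset_Ldef2 unfolding fa_prob_def additive_def by blast+
qed

lemma E_set_extension:
  assumes \<omega>: "\<omega> \<in> E_set M n k A lam \<mu>"
    and Q: "additive UNIV Q" "\<And>X. 0 \<le> Q X" "\<And>X. X \<in> Bxy M n k A \<Longrightarrow> Q X = \<omega> X"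
  shows "Q \<in> E_set M n k A lam \<mu>"
proof -
  have \<omega>_prob: "fa_prob (Ldef2 M n k UNIV) (top2 n k) \<omega>"
    and \<omega>_lam: "\<forall>S\<in>Ldef2 M n k A. \<omega> S = lam S"
    and \<omega>_\<mu>: "\<forall>S\<in>Ldef M n UNIV. \<omega> (cyl_x k S) = \<mu> S"
    using \<omega> unfolding E_set_def Meas2_def by auto
  have "Q (top2 n k) = 1" using Q(3)[OF Bxy.top] \<omega>_prob unfolding fa_prob_def by simp
  then have "Meas2 M n k UNIV Q"
    using \<omega>_prob Q(1,2) unfolding Meas2_def fa_prob_def additive_def by blast
  moreover have "\<forall>S\<in>Ldef2 M n k A. Q S = lam S" using \<omega>_lam Q(3) Bxy.par by metis
  moreover have "\<forall>S\<in>Ldef M n UNIV. Q (cyl_x k S) = \<mu> S" using \<omega>_\<mu> Q(3) Bxy.cyl by metis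
  ultimately show ?thesis unfolding E_set_def by blast
qed

lemma witnesses_le_inner_bound:
  assumes "witnesses M n k A lam \<mu> \<nu>" "\<omega> \<in> E_set M n k A lam \<mu>" "\<phi> \<in> Ldef M k UNIV"
    and inner: "\<And>G. G \<in> Bxy M n k A \<Longrightarrow> G \<subseteq> cyl_y n \<phi> \<Longrightarrow> \<omega> G \<le> d"
  shows "\<nu> \<phi> \<le> d"
proof -
  interpret B: algebra "top2 n k" "Bxy M n k A" by (rule algebra_Bxy)
  obtain Q where Q: "additive UNIV Q" "\<And>X. 0 \<le> Q X" "\<And>X. X \<in> Bxy M n k A \<Longrightarrow> Q X = \<omega> X"
    and "Q (cyl_y n \<phi>) \<le> d"
    using B.additive_extension_le[OF E_set_nonneg_additive_Bxy[OF assms(2)] inner] by blast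
  moreover have "Q \<in> E_set M n k A lam \<mu>" by (rule E_set_extension[OF assms(2) Q])
  ultimately show ?thesis using assms(1,3) unfolding witnesses_def by auto
qed

lemma witnesses_ge_outer_bound:
  assumes "witnesses M n k A lam \<mu> \<nu>" "\<omega> \<in> E_set M n k A lam \<mu>" "\<phi> \<in> Ldef M k UNIV"
    and outer: "\<And>H. H \<in> Bxy M n k A \<Longrightarrow> cyl_y n \<phi> \<subseteq> H \<Longrightarrow> d \<le> \<omega> H"
  shows "d \<le> \<nu> \<phi>"
proof -
  interpret B: algebra "top2 n k" "Bxy M n k A" by (rule algebra_Bxy)
  obtain Q where Q: "additive UNIV Q" "\<And>X. 0 \<le> Q X" "\<And>X. X \<in> Bxy M n k A \<Longrightarrow> Q X = \<omega> X"
    and "d \<le> Q (cyl_y n \<phi>)"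
    using B.additive_extension_ge[OF E_set_nonneg_additive_Bxy[OF assms(2)]
        cyl_y_subset_top2[OF assms(3)] outer] by blast
  moreover have "Q \<in> E_set M n k A lam \<mu>" by (rule E_set_extension[OF assms(2) Q])
  ultimately show ?thesis using assms(1,3) unfolding witnesses_def by auto
qed

theorem proposition3p17:
  fixes M :: "('f,'r,'u) struc" and A :: "'u set" and n k :: nat
    and \<mu> :: "'u list set \<Rightarrow> real" and \<nu> :: "'u list set \<Rightarrow> real"
    and lam \<omega> :: "('u list \<times> 'u list) set \<Rightarrow> real"
    and \<phi> :: "'u list set" and \<epsilon> :: real
  assumes "Meas M n UNIV \<mu>"
    and "Meas M k UNIV \<nu>"
    and "Meas2 M n k A lam"
    and "witnesses M n k A lam \<mu> \<nu>"
    and "\<omega> \<in> E_set M n k A lam \<mu>"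
    and "\<phi> \<in> Ldef M k UNIV"
    and "\<epsilon> > 0"
  shows "\<exists>gm gp. gm \<in> Bxy M n k A \<and> gp \<in> Bxy M n k A
           \<and> gm \<subseteq> cyl_y n \<phi> \<and> cyl_y n \<phi> \<subseteq> gp
           \<and> \<omega> gp - \<omega> gm < \<epsilon>
           \<and> \<bar>\<omega> gp - \<nu> \<phi>\<bar> < \<epsilon> \<and> \<bar>\<omega> gm - \<nu> \<phi>\<bar> < \<epsilon>"
proof -
  interpret B: algebra "top2 n k" "Bxy M n k A" by (rule algebra_Bxy)
  obtain G where G: "G \<in> Bxy M n k A" "G \<subseteq> cyl_y n \<phi>" "\<nu> \<phi> - \<epsilon>/2 < \<omega> G"
    using witnesses_le_inner_bound[OF assms(4-6), of "\<nu> \<phi> - \<epsilon>/2"] assms(7) by force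
  obtain H where H: "H \<in> Bxy M n k A" "cyl_y n \<phi> \<subseteq> H" "\<omega> H < \<nu> \<phi> + \<epsilon>/2"
    using witnesses_ge_outer_bound[OF assms(4-6), of "\<nu> \<phi> + \<epsilon>/2"] assms(7) by force
  have "\<omega> G \<le> \<omega> H"
    using B.nonneg_additive_increasing[OF E_set_nonneg_additive_Bxy[OF assms(5)]] G H
    unfolding increasing_def by blast
  then show ?thesis using G H by (intro exI[of _ G] exI[of _ H]) (auto simp: abs_less_iff)
qed

end
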